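(* Let $\alpha,\beta,\gamma\in\mathbb{Z}[i]$ satisfy $\alpha^2+i\beta^2+\gamma^2=0$, $\alpha\beta\gamma\neq0$ and $\gcd(\alpha,\beta,\gamma)\in U$. Then $\alpha\beta\gamma\equiv0\pmod{1+i}$.
   Context: $\mathbb{Z}[i]$ is the ring of Gaussian integers, $U=\{1,-1,i,-i\}$ its unit group; $\gcd(\alpha,\beta,\gamma)\in U$ means no common non-unit divisor. *)

theory Defs
  imports Complex_Main
begin

definition gauss_ints :: "complex set" where
  "gauss_ints = {z. Re z \<in> \<int> \<and> Im z \<in> \<int>}"

definition gdvd :: "complex \<Rightarrow> complex \<Rightarrow> bool" where
  "gdvd a b \<longleftrightarrow> (\<exists>c \<in> gauss_ints. b = a * c)"

definition gauss_units :: "complex set" where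
  "gauss_units = {1, -1, \<i>, -\<i>}"

definition gauss_coprime3 :: "complex \<Rightarrow> complex \<Rightarrow> complex \<Rightarrow> bool" where
  "gauss_coprime3 a b c \<longleftrightarrow>
     (\<forall>d \<in> gauss_ints. gdvd d a \<and> gdvd d b \<and> gdvd d c \<longrightarrow> d \<in> gauss_units)"

end

theory Submission
  imports Defs
begin

text \<open>Modulo the prime \<open>1 + \<i>\<close> the Gaussian integers reduce to the field with two elements,
  the class of \<open>a + b\<i>\<close> being the parity of \<open>a + b\<close>. In that field squaring is the identity and
  \<open>\<i> \<equiv> 1\<close>, so the equation becomes \<open>\<alpha> + \<beta> + \<gamma> \<equiv> 0\<close>, which forces one of
  \<open>\<alpha>, \<beta>, \<gamma>\<close> to be divisible by \<open>1 + \<i>\<close>.\<close>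

lemma gauss_intsE:
  assumes "z \<in> gauss_ints"
  obtains a b :: int where "z = Complex (of_int a) (of_int b)"
proof -
  from assms obtain a b where "Re z = of_int a" "Im z = of_int b"
    unfolding gauss_ints_def by (auto elim!: Ints_cases)
  then have "z = Complex (of_int a) (of_int b)" by (simp add: complex_eq_iff)
  then show ?thesis using that by blast
qed

lemma gauss_ints_mult: "x \<in> gauss_ints \<Longrightarrow> y \<in> gauss_ints \<Longrightarrow> x * y \<in> gauss_ints"
  unfolding gauss_ints_def by auto

lemma gdvd_mult_right:
  assumes "gdvd d x" "y \<in> gauss_ints"
  shows "gdvd d (x * y)"
proof -
  from assms(1) obtain c where "c \<in> gauss_ints" "x = d * c" unfolding gdvd_def by blast
  then show ?thesis unfolding gdvd_def using assms(2) gauss_ints_mult by (metis mult.assoc)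
qed

lemma gdvd_mult_left: "gdvd d y \<Longrightarrow> x \<in> gauss_ints \<Longrightarrow> gdvd d (x * y)"
  using gdvd_mult_right by (metis mult.commute)

lemma one_plus_i_gdvd_if_even:
  assumes "even (a + b)"
  shows "gdvd (1 + \<i>) (Complex (of_int a) (of_int b))"
proof -
  obtain k where k: "a + b = 2 * k" using assms by blast
  define w where "w = Complex (of_int k) (of_int (k - a))"
  have "w \<in> gauss_ints" unfolding w_def gauss_ints_def by simp
  moreover have "Complex (of_int a) (of_int b) = (1 + \<i>) * w"
    unfolding w_def using k by (simp add: complex_eq_iff algebra_simps)
  ultimately show ?thesis unfolding gdvd_def by blast
qed

text \<open>The left-hand sides are \<open>Re + Im\<close> of \<open>(a + b\<i>)\<^sup>2\<close> and of \<open>\<i> (a + b\<i>)\<^sup>2\<close>.\<close>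

lemma even_Re_plus_Im_square_iff: "even (a\<^sup>2 - b\<^sup>2 + 2 * a * b) \<longleftrightarrow> even ((a::int) + b)"
  by (auto simp: power2_eq_square even_add even_mult_iff)

lemma even_Re_plus_Im_i_square_iff: "even (a\<^sup>2 - b\<^sup>2 - 2 * a * b) \<longleftrightarrow> even ((a::int) + b)"
  by (auto simp: power2_eq_square even_add even_mult_iff)

lemma even_summand_if_sum_zero:
  assumes "(x::int) + y + z = 0"
  shows "even x \<or> even y \<or> even z"
proof -
  have "even (x + y + z)" using assms by simp
  then show ?thesis by auto
qed

lemma one_plus_i_gdvd_some_root:
  assumes "\<alpha> \<in> gauss_ints" "\<beta> \<in> gauss_ints" "\<gamma> \<in> gauss_ints"
    and "\<alpha>\<^sup>2 + \<i> * \<beta>\<^sup>2 + \<gamma>\<^sup>2 = 0"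
  shows "gdvd (1 + \<i>) \<alpha> \<or> gdvd (1 + \<i>) \<beta> \<or> gdvd (1 + \<i>) \<gamma>"
proof -
  obtain a b where \<alpha>: "\<alpha> = Complex (of_int a) (of_int b)" using assms(1) by (rule gauss_intsE)
  obtain c d where \<beta>: "\<beta> = Complex (of_int c) (of_int d)" using assms(2) by (rule gauss_intsE)
  obtain e f where \<gamma>: "\<gamma> = Complex (of_int e) (of_int f)" using assms(3) by (rule gauss_intsE)
  have "Re (\<alpha>\<^sup>2 + \<i> * \<beta>\<^sup>2 + \<gamma>\<^sup>2) + Im (\<alpha>\<^sup>2 + \<i> * \<beta>\<^sup>2 + \<gamma>\<^sup>2) = 0"
    using assms(4) by simp
  then have "real_of_int ((a\<^sup>2 - b\<^sup>2 + 2*a*b) + (c\<^sup>2 - d\<^sup>2 - 2*c*d) + (e\<^sup>2 - f\<^sup>2 + 2*e*f)) = 0"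
    unfolding \<alpha> \<beta> \<gamma> by (simp add: power2_eq_square algebra_simps)
  then have "even (a\<^sup>2 - b\<^sup>2 + 2*a*b) \<or> even (c\<^sup>2 - d\<^sup>2 - 2*c*d) \<or> even (e\<^sup>2 - f\<^sup>2 + 2*e*f)"
    by (intro even_summand_if_sum_zero) linarith
  then have "even (a + b) \<or> even (c + d) \<or> even (e + f)"
    by (simp only: even_Re_plus_Im_square_iff even_Re_plus_Im_i_square_iff)
  then show ?thesis unfolding \<alpha> \<beta> \<gamma> using one_plus_i_gdvd_if_even by blast
qed

theorem lemma4p5:
  fixes \<alpha> \<beta> \<gamma> :: complex
  assumes "\<alpha> \<in> gauss_ints" and "\<beta> \<in> gauss_ints" and "\<gamma> \<in> gauss_ints"
    and "\<alpha>\<^sup>2 + \<i> * \<beta>\<^sup>2 + \<gamma>\<^sup>2 = 0"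
    and "\<alpha> * \<beta> * \<gamma> \<noteq> 0"
    and "gauss_coprime3 \<alpha> \<beta> \<gamma>"
  shows "gdvd (1 + \<i>) (\<alpha> * \<beta> * \<gamma>)"
proof -
  have \<alpha>\<beta>: "\<alpha> * \<beta> \<in> gauss_ints" using assms(1,2) by (rule gauss_ints_mult)
  from one_plus_i_gdvd_some_root[OF assms(1-4)] show ?thesis
  proof (elim disjE)
    assume "gdvd (1 + \<i>) \<alpha>"
    then show ?thesis using assms(2,3) by (intro gdvd_mult_right)
  next
    assume "gdvd (1 + \<i>) \<beta>"
    then show ?thesis using assms(1,3) by (intro gdvd_mult_right gdvd_mult_left)
  next
    assume "gdvd (1 + \<i>) \<gamma>"
    then show ?thesis using \<alpha>\<beta> by (rule gdvd_mult_left)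
  qed
qed

end
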